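(* Let $R$ be a commutative ring of characteristic zero and $P \subseteq R$ a subsemiring (i.e. $P + P \subseteq P$, $PP \subseteq P$, $0, 1 \in P$). Suppose that there is $v \in P$ such that for every $a \in R$ there is $p \in \mathbb{N}[X]$ with $p(v) - a \in P$. Then for every $a \in R$, the following are equivalent: (1) $f(a) \geq 0$ for every ring homomorphism $f : R \to \mathbb{R}$ with $f(P) \subseteq \mathbb{R}_+$. (2) For every $r \in \mathbb{R}_+$ and $\varepsilon > 0$, there exist a polynomial $q \in \mathbb{N}[X]$, an element $w \in P$ and $n \in \mathbb{N}_{>0}$ such that $q(r) \leq \varepsilon n$ and $(1 + w)\,(n\,a + q(v)) \in P$.
   Context: $\mathbb{N}_{>0}$ denotes the positive integers; $q(v)$ denotes evaluation of $q$ at $v$ in $R$ and $q(r)$ evaluation at the real number $r$. *)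

theory Defs
  imports Complex_Main "HOL-Computational_Algebra.Polynomial"
begin

definition ring_hom_real :: "('a::comm_ring_1 \<Rightarrow> real) \<Rightarrow> bool" where
  "ring_hom_real f \<longleftrightarrow>
     (\<forall>x y. f (x + y) = f x + f y) \<and> (\<forall>x y. f (x * y) = f x * f y) \<and> f 1 = 1"

definition eval_nat_poly :: "nat poly \<Rightarrow> 'a::comm_semiring_1 \<Rightarrow> 'a" where
  "eval_nat_poly p x = poly (map_poly of_nat p) x"

end

(*
  Fix r >= 0 and call a certified at r if it satisfies the condition of (2) for every
  epsilon > 0. The certified elements form a subsemiring containing P, and it is
  archimedean: m - v is certified for every integer m > r (telescope m^(J+1) - v^(J+1)),
  and every element lies below some q(v).

  For an archimedean subsemiring S the Positivstellensatz of Kadison-Dubois and Krivine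
  holds: if f b > 0 for every ring homomorphism f : R -> real that is nonnegative on S, then
  K b is in S for some K > 0. Otherwise no t b lies in 1 + S, so Zorn's lemma gives a maximal
  S-module containing S and -b but not -1; it is total, and the Dedekind cut of each x
  against the fractions p/q is a homomorphism f with f b <= 0.

  If a satisfies (1), the Positivstellensatz applied to the certified elements and to
  b = n a + 1 certifies every n a + 1, hence a. Conversely, applying f to a certificate at
  r = f v gives f a >= -epsilon.
*)
theory Submission
  imports Defs
begin

lemma eval_nat_poly_0 [simp]: "eval_nat_poly 0 x = 0"
  by (simp add: eval_nat_poly_def)

lemma eval_nat_poly_pCons [simp]: "eval_nat_poly (pCons c p) x = of_nat c + x * eval_nat_poly p x"
  by (simp add: eval_nat_poly_def map_poly_pCons)

lemma eval_nat_poly_add: "eval_nat_poly (p + q) x = eval_nat_poly p x + eval_nat_poly q x"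
  by (induction p q rule: poly_induct2) (simp_all add: algebra_simps)

lemma eval_nat_poly_smult: "eval_nat_poly (smult c p) x = of_nat c * eval_nat_poly p x"
  by (induction p) (simp_all add: algebra_simps)

lemma eval_nat_poly_mult: "eval_nat_poly (p * q) x = eval_nat_poly p x * eval_nat_poly q x"
  by (induction p) (simp_all add: eval_nat_poly_add eval_nat_poly_smult algebra_simps)

lemma eval_nat_poly_monom [simp]: "eval_nat_poly (monom c k) x = of_nat c * x ^ k"
  by (simp add: eval_nat_poly_def map_poly_monom poly_monom)

lemma eval_nat_poly_nonneg: "(r::real) \<ge> 0 \<Longrightarrow> eval_nat_poly p r \<ge> 0"
  by (induction p) simp_all

lemma ring_hom_real_0: "ring_hom_real f \<Longrightarrow> f 0 = 0"
  unfolding ring_hom_real_def by (metis add_cancel_right_right)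

lemma ring_hom_real_of_nat: "ring_hom_real f \<Longrightarrow> f (of_nat n) = of_nat n"
  by (induction n) (auto simp: ring_hom_real_0 ring_hom_real_def)

lemma ring_hom_real_eval_nat_poly:
  "ring_hom_real f \<Longrightarrow> f (eval_nat_poly p x) = eval_nat_poly p (f x)"
  by (induction p) (auto simp: ring_hom_real_0 ring_hom_real_of_nat ring_hom_real_def)

locale subsemiring =
  fixes S :: "'a::comm_ring_1 set"
  assumes zero_mem: "0 \<in> S" and one_mem: "1 \<in> S"
    and add_mem: "x \<in> S \<Longrightarrow> y \<in> S \<Longrightarrow> x + y \<in> S"
    and mult_mem: "x \<in> S \<Longrightarrow> y \<in> S \<Longrightarrow> x * y \<in> S"
begin

lemma of_nat_mem: "of_nat n \<in> S"
  by (induction n) (simp_all add: zero_mem one_mem add_mem)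

lemma of_int_mem: "z \<ge> 0 \<Longrightarrow> of_int z \<in> S"
  using of_nat_mem[of "nat z"] by simp

lemma power_mem: "x \<in> S \<Longrightarrow> x ^ k \<in> S"
  by (induction k) (simp_all add: one_mem mult_mem)

lemma eval_nat_poly_mem: "x \<in> S \<Longrightarrow> eval_nat_poly p x \<in> S"
  by (induction p) (simp_all add: zero_mem add_mem mult_mem of_nat_mem)

lemma one_plus_mult_closed:
  assumes "w1 \<in> S" "w2 \<in> S"
  obtains w where "w \<in> S" "(1 + w1) * (1 + w2) = 1 + w"
proof
  show "w1 + w2 + w1 * w2 \<in> S" using assms by (intro add_mem mult_mem)
qed (simp add: algebra_simps)

lemma power_diff_cofactor:
  assumes "x \<in> S" "y \<in> S"
  shows "\<exists>g\<in>S. x ^ Suc k - y ^ Suc k = (x - y) * (x ^ k + y * g)"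
proof (induction k)
  case 0
  show ?case using zero_mem by force
next
  case (Suc k)
  then obtain g where "g \<in> S" and g: "x ^ Suc k - y ^ Suc k = (x - y) * (x ^ k + y * g)" by blast
  have "x ^ Suc (Suc k) - y ^ Suc (Suc k) = x * (x ^ Suc k - y ^ Suc k) + (x - y) * y ^ Suc k"
    by (simp add: algebra_simps)
  also have "\<dots> = (x - y) * (x ^ Suc k + y * (x * g + y ^ k))"
    unfolding g by (simp add: algebra_simps)
  finally show ?case
    using \<open>g \<in> S\<close> assms by (intro bexI[of _ "x * g + y ^ k"] add_mem mult_mem power_mem)
qed

end

locale archimedean_subsemiring = subsemiring +
  assumes archimedean: "\<exists>n. of_nat n - x \<in> S"
begin

lemma bounded_by_of_nat:
  obtains k where "of_nat k - x \<in> S" "of_nat k + x \<in> S"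
proof -
  obtain k1 k2 where k1: "of_nat k1 - x \<in> S" and k2: "of_nat k2 - (- x) \<in> S"
    using archimedean by blast
  show thesis
    using that[of "k1 + k2"] add_mem[OF k1 of_nat_mem[of k2]] add_mem[OF k2 of_nat_mem[of k1]]
    by (simp add: algebra_simps)
qed

text \<open>By \<open>k (L b + e) - L = L m + (k - t)(L b + e) + e t\<close>, one step turns \<open>L b + e \<in> S\<close> into
  \<open>k L b + (k e - L) \<in> S\<close>, lowering the ratio \<open>e / L\<close> by \<open>1 / k\<close>; starting from \<open>b + c\<close>,
  the constant is used up after \<open>c k\<close> steps.\<close>
lemma multiple_mem_of_mult_eq_one_plus:
  assumes t: "t \<in> S" and m: "m \<in> S" and tb: "t * b = 1 + m"
  obtains K :: nat where "K > 0" "of_nat K * b \<in> S"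
proof -
  obtain k0 where "of_nat k0 - t \<in> S" using archimedean by blast
  define k where "k = Suc k0"
  have k: "of_nat k - t \<in> S"
    using add_mem[OF \<open>of_nat k0 - t \<in> S\<close> one_mem] by (simp add: k_def algebra_simps)
  obtain c where c: "of_nat c + b \<in> S" using archimedean[of "- b"] by auto
  have step: "of_nat k * (of_nat L * b + e) - of_nat L \<in> S"
    if "of_nat L * b + e \<in> S" "e \<in> S" for L e
  proof -
    have "of_nat L * m + (of_nat k - t) * (of_nat L * b + e) + e * t =
        of_nat k * (of_nat L * b + e) - of_nat L * (t * b - m)"
      by (simp add: algebra_simps)
    also have "\<dots> = of_nat k * (of_nat L * b + e) - of_nat L"
      using tb by simp
    finally show ?thesis
      using that t m k by (metis add_mem mult_mem of_nat_mem)
  qed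
  define y where "y j = of_nat (k ^ Suc j) * b + of_nat (k ^ j * (c * k - j))" for j
  have "y j \<in> S" if "j \<le> c * k" for j
    using that
  proof (induction j)
    case 0
    show ?case using mult_mem[OF of_nat_mem[of k] c] by (simp add: y_def algebra_simps)
  next
    case (Suc j)
    define d where "d = c * k - Suc j"
    have "c * k - j = Suc d" using Suc.prems by (simp add: d_def)
    then have "y (Suc j) = of_nat k * y j - of_nat (k ^ Suc j)"
      by (simp add: y_def d_def[symmetric] algebra_simps)
    also have "\<dots> \<in> S"
      using Suc unfolding y_def by (intro step of_nat_mem) simp
    finally show ?case .
  qed
  from this[of "c * k"] show thesis
    by (intro that[of "k ^ Suc (c * k)"]) (simp_all add: y_def k_def)
qed

end

definition (in subsemiring) S_module :: "'a set \<Rightarrow> bool" where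
  "S_module N \<longleftrightarrow> (\<forall>x\<in>N. \<forall>y\<in>N. x + y \<in> N) \<and> (\<forall>s\<in>S. \<forall>x\<in>N. s * x \<in> N)"

lemma (in subsemiring) S_module_S: "S_module S"
  by (simp add: S_module_def add_mem mult_mem)

lemma (in subsemiring) S_module_adjoin:
  assumes "S_module N"
  shows "S_module {n + t * y | n t. n \<in> N \<and> t \<in> S}" (is "S_module ?N'")
  unfolding S_module_def
proof (intro conjI ballI)
  fix u u' assume "u \<in> ?N'" "u' \<in> ?N'"
  then obtain n t n' t' where "n \<in> N" "t \<in> S" "n' \<in> N" "t' \<in> S"
    and u: "u = n + t * y" and u': "u' = n' + t' * y"
    by blast
  then have "n + n' \<in> N" "t + t' \<in> S"
    using \<open>S_module N\<close> add_mem by (auto simp: S_module_def)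
  moreover have "u + u' = (n + n') + (t + t') * y"
    unfolding u u' by (simp add: algebra_simps)
  ultimately show "u + u' \<in> ?N'" by blast
next
  fix s u assume "s \<in> S" "u \<in> ?N'"
  then obtain n t where "n \<in> N" "t \<in> S" and u: "u = n + t * y"
    by blast
  then have "s * n \<in> N" "s * t \<in> S"
    using \<open>S_module N\<close> \<open>s \<in> S\<close> mult_mem by (auto simp: S_module_def)
  moreover have "s * u = s * n + (s * t) * y"
    unfolding u by (simp add: algebra_simps)
  ultimately show "s * u \<in> ?N'" by blast
qed

lemma (in subsemiring) maximal_S_module_exists:
  assumes "S_module N0" "- 1 \<notin> N0"
  obtains N where "N0 \<subseteq> N" "S_module N" "- 1 \<notin> N"
    "\<And>N'. N \<subseteq> N' \<Longrightarrow> S_module N' \<Longrightarrow> - 1 \<notin> N' \<Longrightarrow> N' = N"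
proof -
  let ?A = "{N. N0 \<subseteq> N \<and> S_module N \<and> - 1 \<notin> N}"
  have nonempty: "?A \<noteq> {}" using assms by blast
  have chain_closed: "\<Union>C \<in> ?A" if "C \<noteq> {}" and chain: "subset.chain ?A C" for C
  proof -
    have C: "C \<subseteq> ?A" using chain by (simp add: subset_chain_def)
    have "S_module (\<Union>C)"
      unfolding S_module_def
    proof (intro conjI ballI)
      fix x y assume "x \<in> \<Union>C" "y \<in> \<Union>C"
      then obtain X Y where "X \<in> C" "Y \<in> C" "x \<in> X" "y \<in> Y" by blast
      moreover have "X \<subseteq> Y \<or> Y \<subseteq> X"
        using chain \<open>X \<in> C\<close> \<open>Y \<in> C\<close> by (auto simp: subset_chain_def)
      ultimately obtain Z where "Z \<in> C" "x \<in> Z" "y \<in> Z" by blast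
      then have "x + y \<in> Z" using C by (auto simp: S_module_def)
      then show "x + y \<in> \<Union>C" using \<open>Z \<in> C\<close> by blast
    next
      fix s x assume "s \<in> S" "x \<in> \<Union>C"
      then obtain X where "X \<in> C" "x \<in> X" by blast
      then have "s * x \<in> X" using C \<open>s \<in> S\<close> by (auto simp: S_module_def)
      then show "s * x \<in> \<Union>C" using \<open>X \<in> C\<close> by blast
    qed
    moreover obtain X where "X \<in> C" using \<open>C \<noteq> {}\<close> by blast
    then have "N0 \<subseteq> \<Union>C" using C by auto
    moreover have "- 1 \<notin> \<Union>C" using C by auto
    ultimately show ?thesis by simp
  qed
  from subset_Zorn_nonempty[OF nonempty chain_closed]
  obtain N where "N \<in> ?A" and "\<forall>X\<in>?A. N \<subseteq> X \<longrightarrow> X = N" ..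
  then show thesis by (intro that[of N]) blast+
qed

text \<open>If neither \<open>x\<close> nor \<open>- x\<close> lies in \<open>N\<close>, maximality yields \<open>- 1 = n\<^sub>1 + t\<^sub>1 x\<close> and
  \<open>- 1 = n\<^sub>2 - t\<^sub>2 x\<close>; eliminating \<open>x\<close> with a bound \<open>k \<plusminus> x \<in> S\<close> puts \<open>- 1\<close> into \<open>N\<close>.\<close>
lemma (in archimedean_subsemiring) maximal_S_module_total:
  assumes "S \<subseteq> N" "S_module N" "- 1 \<notin> N"
    and maximal: "\<And>N'. N \<subseteq> N' \<Longrightarrow> S_module N' \<Longrightarrow> - 1 \<notin> N' \<Longrightarrow> N' = N"
  shows "x \<in> N \<or> - x \<in> N"
proof -
  have N_add: "\<And>x y. x \<in> N \<Longrightarrow> y \<in> N \<Longrightarrow> x + y \<in> N"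
    and N_mult: "\<And>s x. s \<in> S \<Longrightarrow> x \<in> N \<Longrightarrow> s * x \<in> N"
    using \<open>S_module N\<close> by (auto simp: S_module_def)
  have escape: "\<exists>n\<in>N. \<exists>t\<in>S. - 1 = n + t * y" if "y \<notin> N" for y
  proof (rule ccontr)
    assume no_escape: "\<not> (\<exists>n\<in>N. \<exists>t\<in>S. - 1 = n + t * y)"
    define N' where "N' = {n + t * y | n t. n \<in> N \<and> t \<in> S}"
    have "N \<subseteq> N'"
      unfolding N'_def using zero_mem by force
    moreover have "S_module N'"
      unfolding N'_def using \<open>S_module N\<close> by (rule S_module_adjoin)
    moreover have "- 1 \<notin> N'" using no_escape unfolding N'_def by blast
    ultimately have "N' = N" by (rule maximal)
    moreover have "y \<in> N'"
      unfolding N'_def using \<open>S \<subseteq> N\<close> zero_mem one_mem by force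
    ultimately show False using that by blast
  qed
  show ?thesis
  proof (rule ccontr)
    assume "\<not> (x \<in> N \<or> - x \<in> N)"
    then obtain n1 t1 n2 t2 where "n1 \<in> N" "t1 \<in> S" "n2 \<in> N" "t2 \<in> S"
      and n1: "- 1 = n1 + t1 * x" and n2: "- 1 = n2 + t2 * - x"
      using escape by meson
    obtain k where "of_nat k - x \<in> S" "of_nat k + x \<in> S" by (rule bounded_by_of_nat)
    have e1: "n1 = - 1 - t1 * x" and e2: "n2 = - 1 + t2 * x"
      using n1 n2 by (metis add_diff_cancel_right', metis minus_mult_right diff_conv_add_uminus add_diff_cancel_right')
    have "- 1 = of_nat k * (t2 * n1 + t1 * n2) + (n1 + t1 * (of_nat k + x))
        + (n2 + t2 * (of_nat k - x)) + 1"
      unfolding e1 e2 by (simp add: algebra_simps)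
    also have "\<dots> \<in> N"
    proof -
      have "n1 + t1 * (of_nat k + x) \<in> N" "n2 + t2 * (of_nat k - x) \<in> N"
        using \<open>n1 \<in> N\<close> \<open>t1 \<in> S\<close> \<open>n2 \<in> N\<close> \<open>t2 \<in> S\<close> \<open>of_nat k - x \<in> S\<close>
          \<open>of_nat k + x \<in> S\<close> \<open>S \<subseteq> N\<close> N_add mult_mem by blast+
      moreover have "of_nat k * (t2 * n1 + t1 * n2) \<in> N"
        using \<open>n1 \<in> N\<close> \<open>t1 \<in> S\<close> \<open>n2 \<in> N\<close> \<open>t2 \<in> S\<close> by (intro N_mult N_add of_nat_mem)
      ultimately show ?thesis
        using \<open>S \<subseteq> N\<close> one_mem N_add by blast
    qed
    finally show False using \<open>- 1 \<notin> N\<close> by blast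
  qed
qed

lemma exists_fraction_between:
  fixes a c :: real
  assumes "a < c"
  obtains p q :: int where "q > 0" "a < of_int p / of_int q" "of_int p / of_int q < c"
proof -
  obtain r where "r \<in> \<rat>" "a < r" "r < c" using Rats_dense_in_real[OF assms] by blast
  then show thesis using that by (metis Rats_cases')
qed

lemma le_if_fractions_below_le:
  fixes a c :: real
  assumes "\<And>p q :: int. q > 0 \<Longrightarrow> of_int p / of_int q < a \<Longrightarrow> of_int p / of_int q \<le> c"
  shows "a \<le> c"
  by (metis assms exists_fraction_between linorder_not_le)

lemma ge_if_fractions_above_ge:
  fixes a c :: real
  assumes "\<And>p q :: int. q > 0 \<Longrightarrow> a < of_int p / of_int q \<Longrightarrow> c \<le> of_int p / of_int q"
  shows "c \<le> a"
  by (metis assms exists_fraction_between linorder_not_le)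

locale total_S_module = archimedean_subsemiring +
  fixes N :: "'a set"
  assumes subset_N: "S \<subseteq> N"
    and N_add: "x \<in> N \<Longrightarrow> y \<in> N \<Longrightarrow> x + y \<in> N"
    and N_mult: "s \<in> S \<Longrightarrow> x \<in> N \<Longrightarrow> s * x \<in> N"
    and minus_one_notin_N: "- 1 \<notin> N"
    and total: "x \<in> N \<or> - x \<in> N"
begin

lemma nonneg_if_of_int_mem_N:
  assumes "of_int z \<in> N"
  shows "z \<ge> 0"
proof (rule ccontr)
  assume "\<not> z \<ge> 0"
  then have "of_int (- z - 1) \<in> S" by (intro of_int_mem) simp
  then have "of_int (- z - 1) \<in> N" using subset_N by blast
  then have "of_int z + of_int (- z - 1) \<in> N" using assms N_add by blast
  then show False using minus_one_notin_N by simp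
qed

text \<open>\<open>N\<close> is the total preorder \<open>x \<le> y \<longleftrightarrow> y - x \<in> N\<close> on \<open>R\<close>; \<open>cut_value x\<close> is the real number
  cut out by the fractions \<open>p / q\<close> with \<open>p \<le> q x\<close>.\<close>
definition lower_fractions :: "'a \<Rightarrow> real set" where
  "lower_fractions x = {of_int p / of_int q | p q. q > 0 \<and> of_int q * x - of_int p \<in> N}"

definition cut_value :: "'a \<Rightarrow> real" where
  "cut_value x = Sup (lower_fractions x)"

lemma fraction_le_fraction:
  assumes "q > 0" "q' > 0" "of_int q * x - of_int p \<in> N" "of_int p' - of_int q' * x \<in> N"
  shows "of_int p / of_int q \<le> (of_int p' / of_int q' :: real)"
proof -
  have "(of_int (q * p' - q' * p) :: 'a) =
      of_int q' * (of_int q * x - of_int p) + of_int q * (of_int p' - of_int q' * x)"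
    by (simp add: algebra_simps)
  also have "\<dots> \<in> N"
    using assms of_int_mem[of q] of_int_mem[of q'] by (intro N_add N_mult) auto
  finally have "q' * p \<le> q * p'" using nonneg_if_of_int_mem_N by fastforce
  then have "of_int p * of_int q' \<le> (of_int p' * of_int q :: real)"
    by (metis mult.commute of_int_le_iff of_int_mult)
  then show ?thesis using assms(1,2) by (simp add: divide_simps)
qed

lemma bdd_above_lower_fractions: "bdd_above (lower_fractions x)"
proof -
  obtain k where "of_nat k - x \<in> S" by (rule bounded_by_of_nat)
  then have "of_int (int k) - of_int 1 * x \<in> N" using subset_N by auto
  then have "d \<le> of_int (int k) / of_int 1" if "d \<in> lower_fractions x" for d
    using that fraction_le_fraction[of _ 1 x _ "int k"] unfolding lower_fractions_def by auto
  then show ?thesis unfolding bdd_above_def by blast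
qed

lemma lower_fractions_nonempty: "lower_fractions x \<noteq> {}"
proof -
  obtain k where "of_nat k + x \<in> S" by (rule bounded_by_of_nat)
  then have "of_int 1 * x - of_int (- int k) \<in> N" using subset_N by (auto simp: algebra_simps)
  then have "of_int (- int k) / of_int 1 \<in> lower_fractions x"
    unfolding lower_fractions_def by (intro CollectI exI[of _ "- int k"] exI[of _ 1]) simp
  then show ?thesis by blast
qed

lemma cut_value_ge: "q > 0 \<Longrightarrow> of_int q * x - of_int p \<in> N \<Longrightarrow> of_int p / of_int q \<le> cut_value x"
  unfolding cut_value_def
  by (rule cSup_upper[OF _ bdd_above_lower_fractions]) (auto simp: lower_fractions_def)

lemma cut_value_le: "q > 0 \<Longrightarrow> of_int p - of_int q * x \<in> N \<Longrightarrow> cut_value x \<le> of_int p / of_int q"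
  unfolding cut_value_def
  by (rule cSup_least[OF lower_fractions_nonempty])
    (auto simp: lower_fractions_def intro: fraction_le_fraction)

lemma mem_N_if_fraction_less_cut:
  "q > 0 \<Longrightarrow> of_int p / of_int q < cut_value x \<Longrightarrow> of_int q * x - of_int p \<in> N"
  using total[of "of_int q * x - of_int p"] cut_value_le[of q p x] by force

lemma mem_N_if_cut_less_fraction:
  "q > 0 \<Longrightarrow> cut_value x < of_int p / of_int q \<Longrightarrow> of_int p - of_int q * x \<in> N"
  using total[of "of_int p - of_int q * x"] cut_value_ge[of q x p] by force

lemma cut_value_nonneg: "x \<in> N \<Longrightarrow> 0 \<le> cut_value x"
  using cut_value_ge[of 1 x 0] by simp

lemma cut_value_one: "cut_value 1 = 1"
  using cut_value_ge[of 1 1 1] cut_value_le[of 1 1 1] subset_N zero_mem by auto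

lemma cut_value_uminus: "cut_value (- x) = - cut_value x"
proof (rule antisym)
  show "cut_value (- x) \<le> - cut_value x"
  proof (rule le_if_fractions_below_le)
    fix p q :: int assume "q > 0" "of_int p / of_int q < cut_value (- x)"
    then have "of_int q * (- x) - of_int p \<in> N" by (rule mem_N_if_fraction_less_cut)
    moreover have "of_int q * (- x) - of_int p = of_int (- p) - of_int q * x"
      by (simp add: algebra_simps)
    ultimately have "of_int (- p) - of_int q * x \<in> N" by metis
    then show "of_int p / of_int q \<le> - cut_value x" using cut_value_le[OF \<open>q > 0\<close>] by fastforce
  qed
  show "- cut_value x \<le> cut_value (- x)"
  proof (rule ge_if_fractions_above_ge)
    fix p q :: int assume "q > 0" "cut_value (- x) < of_int p / of_int q"
    then have "of_int p - of_int q * (- x) \<in> N" by (rule mem_N_if_cut_less_fraction)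
    moreover have "of_int p - of_int q * (- x) = of_int q * x - of_int (- p)"
      by (simp add: algebra_simps)
    ultimately have "of_int q * x - of_int (- p) \<in> N" by metis
    then show "- cut_value x \<le> of_int p / of_int q" using cut_value_ge[OF \<open>q > 0\<close>] by fastforce
  qed
qed

lemma cut_value_add_ge: "cut_value x + cut_value y \<le> cut_value (x + y)"
proof -
  have sum_le: "of_int p / of_int q + of_int p' / of_int q' \<le> cut_value (x + y)"
    if pq: "q > 0" "of_int p / of_int q < cut_value x" and pq': "q' > 0" "of_int p' / of_int q' < cut_value y"
    for p q p' q' :: int
  proof -
    have "of_int (q * q') * (x + y) - of_int (q' * p + q * p') =
        of_int q' * (of_int q * x - of_int p) + of_int q * (of_int q' * y - of_int p')"
      by (simp add: algebra_simps)
    also have "\<dots> \<in> N"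
      using mem_N_if_fraction_less_cut[OF pq] mem_N_if_fraction_less_cut[OF pq']
        of_int_mem[of q] of_int_mem[of q'] pq pq'
      by (intro N_add N_mult) auto
    finally have "of_int (q' * p + q * p') / of_int (q * q') \<le> cut_value (x + y)"
      using pq pq' by (intro cut_value_ge) auto
    then show ?thesis using pq pq' by (simp add: field_simps)
  qed
  have "cut_value x \<le> cut_value (x + y) - cut_value y"
  proof (rule le_if_fractions_below_le)
    fix p q :: int assume "q > 0" "of_int p / of_int q < cut_value x"
    have "cut_value y \<le> cut_value (x + y) - of_int p / of_int q"
      by (rule le_if_fractions_below_le) (use sum_le \<open>q > 0\<close> \<open>of_int p / of_int q < cut_value x\<close> in force)
    then show "of_int p / of_int q \<le> cut_value (x + y) - cut_value y" by simp
  qed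
  then show ?thesis by simp
qed

lemma cut_value_add: "cut_value (x + y) = cut_value x + cut_value y"
proof (rule antisym)
  have "cut_value (x + y) + cut_value (- y) \<le> cut_value x"
    using cut_value_add_ge[of "x + y" "- y"] by simp
  then show "cut_value (x + y) \<le> cut_value x + cut_value y" by (simp add: cut_value_uminus)
qed (rule cut_value_add_ge)

lemma cut_value_diff: "cut_value (x - y) = cut_value x - cut_value y"
  using cut_value_add[of x "- y"] by (simp add: cut_value_uminus)

lemma cut_value_zero: "cut_value 0 = 0"
  using cut_value_add[of 0 0] by simp

lemma cut_value_of_nat_mult: "cut_value (of_nat n * x) = of_nat n * cut_value x"
  by (induction n) (simp_all add: cut_value_zero cut_value_add algebra_simps)

lemma cut_value_of_nat: "cut_value (of_nat n) = of_nat n"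
  using cut_value_of_nat_mult[of n 1] by (simp add: cut_value_one)

lemma cut_value_of_int_mult: "cut_value (of_int z * x) = of_int z * cut_value x"
  by (cases z rule: int_cases)
    (simp_all add: cut_value_of_nat_mult cut_value_uminus flip: of_nat_Suc)

lemma cut_value_mult_mem_S:
  assumes "s \<in> S"
  shows "cut_value (s * y) = cut_value s * cut_value y"
proof -
  have "0 \<le> cut_value s" using assms subset_N cut_value_nonneg by blast
  have lower: "of_int p / of_int q * cut_value s \<le> cut_value (s * y)"
    if "q > 0" "of_int p / of_int q < cut_value y" for p q :: int
  proof -
    have "0 \<le> cut_value (s * (of_int q * y - of_int p))"
      using mem_N_if_fraction_less_cut[OF that] assms by (intro cut_value_nonneg N_mult)
    also have "s * (of_int q * y - of_int p) = of_int q * (s * y) - of_int p * s"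
      by (simp add: algebra_simps)
    finally have "0 \<le> of_int q * cut_value (s * y) - of_int p * cut_value s"
      by (simp only: cut_value_diff cut_value_of_int_mult)
    then show ?thesis using \<open>q > 0\<close> by (simp add: field_simps)
  qed
  have upper: "cut_value (s * y) \<le> of_int p / of_int q * cut_value s"
    if "q > 0" "cut_value y < of_int p / of_int q" for p q :: int
  proof -
    have "0 \<le> cut_value (s * (of_int p - of_int q * y))"
      using mem_N_if_cut_less_fraction[OF that] assms by (intro cut_value_nonneg N_mult)
    also have "s * (of_int p - of_int q * y) = of_int p * s - of_int q * (s * y)"
      by (simp add: algebra_simps)
    finally have "0 \<le> of_int p * cut_value s - of_int q * cut_value (s * y)"
      by (simp only: cut_value_diff cut_value_of_int_mult)
    then show ?thesis using \<open>q > 0\<close> by (simp add: field_simps)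
  qed
  show ?thesis
  proof (cases "cut_value s = 0")
    case True
    have "cut_value y - 1 < cut_value y" by simp
    then obtain p q :: int where "q > 0" "cut_value y - 1 < of_int p / of_int q"
      "of_int p / of_int q < cut_value y"
      by (rule exists_fraction_between)
    have "cut_value y < cut_value y + 1" by simp
    then obtain p' q' :: int where "q' > 0" "cut_value y < of_int p' / of_int q'"
      "of_int p' / of_int q' < cut_value y + 1"
      by (rule exists_fraction_between)
    show ?thesis
      using lower[OF \<open>q > 0\<close> \<open>of_int p / of_int q < cut_value y\<close>]
        upper[OF \<open>q' > 0\<close> \<open>cut_value y < of_int p' / of_int q'\<close>] True
      by simp
  next
    case False
    with \<open>0 \<le> cut_value s\<close> have "cut_value s > 0" by simp
    have "cut_value y \<le> cut_value (s * y) / cut_value s"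
      by (rule le_if_fractions_below_le) (use lower \<open>cut_value s > 0\<close> in \<open>simp add: field_simps\<close>)
    moreover have "cut_value (s * y) / cut_value s \<le> cut_value y"
      by (rule ge_if_fractions_above_ge) (use upper \<open>cut_value s > 0\<close> in \<open>simp add: field_simps\<close>)
    ultimately show ?thesis using \<open>cut_value s > 0\<close> by (simp add: field_simps)
  qed
qed

lemma cut_value_mult: "cut_value (x * y) = cut_value x * cut_value y"
proof -
  obtain k where "of_nat k + x \<in> S" by (rule bounded_by_of_nat)
  have "x * y = (of_nat k + x) * y - of_nat k * y"
    by (simp add: algebra_simps)
  then have "cut_value (x * y) = cut_value ((of_nat k + x) * y) - cut_value (of_nat k * y)"
    by (metis cut_value_diff)
  also have "\<dots> = cut_value (of_nat k + x) * cut_value y - of_nat k * cut_value y"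
    by (simp only: cut_value_mult_mem_S[OF \<open>of_nat k + x \<in> S\<close>] cut_value_of_nat_mult)
  also have "\<dots> = cut_value x * cut_value y"
    by (simp add: cut_value_add cut_value_of_nat algebra_simps)
  finally show ?thesis .
qed

lemma ring_hom_real_cut_value: "ring_hom_real cut_value"
  unfolding ring_hom_real_def using cut_value_add cut_value_mult cut_value_one by blast

end

context archimedean_subsemiring
begin

lemma exists_hom_nonpos_if_no_mult_eq_one_plus:
  assumes no_certificate: "\<And>t m. t \<in> S \<Longrightarrow> m \<in> S \<Longrightarrow> t * b \<noteq> 1 + m"
  obtains f where "ring_hom_real f" "\<forall>x\<in>S. 0 \<le> f x" "f b \<le> 0"
proof -
  define N0 where "N0 = {s + t * - b | s t. s \<in> S \<and> t \<in> S}"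
  have "S_module N0"
    unfolding N0_def using S_module_S by (rule S_module_adjoin)
  moreover have "- 1 \<notin> N0"
  proof
    assume "- 1 \<in> N0"
    then obtain s t where "s \<in> S" "t \<in> S" "- 1 = s + t * - b"
      unfolding N0_def by blast
    then have "t * b = 1 + s" by (simp add: algebra_simps)
    then show False using no_certificate \<open>s \<in> S\<close> \<open>t \<in> S\<close> by blast
  qed
  ultimately obtain N where "N0 \<subseteq> N" "S_module N" "- 1 \<notin> N"
    and maximal: "\<And>N'. N \<subseteq> N' \<Longrightarrow> S_module N' \<Longrightarrow> - 1 \<notin> N' \<Longrightarrow> N' = N"
    using maximal_S_module_exists by blast
  have "s + 0 * - b \<in> N0" "0 + 1 * - b \<in> N0" if "s \<in> S" for s
    unfolding N0_def using that zero_mem one_mem by blast+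
  then have "S \<subseteq> N" "- b \<in> N"
    using \<open>N0 \<subseteq> N\<close> zero_mem by auto
  have "x \<in> N \<or> - x \<in> N" for x
    using maximal_S_module_total[OF \<open>S \<subseteq> N\<close> \<open>S_module N\<close> \<open>- 1 \<notin> N\<close> maximal] .
  then interpret total_S_module S N
    using \<open>S \<subseteq> N\<close> \<open>S_module N\<close> \<open>- 1 \<notin> N\<close> by unfold_locales (auto simp: S_module_def)
  show thesis
  proof
    show "ring_hom_real cut_value" by (rule ring_hom_real_cut_value)
    show "\<forall>x\<in>S. 0 \<le> cut_value x" using subset_N cut_value_nonneg by blast
    show "cut_value b \<le> 0" using cut_value_nonneg[OF \<open>- b \<in> N\<close>] by (simp add: cut_value_uminus)
  qed
qed

theorem multiple_mem_if_hom_pos: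
  assumes "\<And>f. ring_hom_real f \<Longrightarrow> \<forall>x\<in>S. 0 \<le> f x \<Longrightarrow> 0 < f b"
  obtains K :: nat where "K > 0" "of_nat K * b \<in> S"
proof -
  obtain t m where "t \<in> S" "m \<in> S" "t * b = 1 + m"
    using exists_hom_nonpos_if_no_mult_eq_one_plus assms by (metis not_le)
  then show thesis using multiple_mem_of_mult_eq_one_plus that by blast
qed

end

locale nat_poly_archimedean = subsemiring P for P :: "'a::comm_ring_1 set" +
  fixes v :: 'a
  assumes v_mem: "v \<in> P"
    and bounded_by_poly: "\<exists>p. eval_nat_poly p v - x \<in> P"
begin

definition approx_cone :: "real \<Rightarrow> 'a set" where
  "approx_cone r = {x. \<forall>\<epsilon>>0. \<exists>q. \<exists>w\<in>P. \<exists>n::nat. n > 0 \<and> eval_nat_poly q r \<le> \<epsilon> * real n \<and>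
      (1 + w) * (of_nat n * x + eval_nat_poly q v) \<in> P}"

lemma mem_approx_coneI:
  assumes "\<And>\<epsilon>. \<epsilon> > 0 \<Longrightarrow> \<exists>q. \<exists>w\<in>P. \<exists>n::nat. n > 0 \<and> eval_nat_poly q r \<le> \<epsilon> * real n \<and>
      (1 + w) * (of_nat n * x + eval_nat_poly q v) \<in> P"
  shows "x \<in> approx_cone r"
  using assms unfolding approx_cone_def by blast

lemma mem_approx_coneE:
  assumes "x \<in> approx_cone r" "\<epsilon> > 0"
  obtains q w n where "w \<in> P" "n > 0" "eval_nat_poly q r \<le> \<epsilon> * real n"
    "(1 + w) * (of_nat n * x + eval_nat_poly q v) \<in> P"
  using assms unfolding approx_cone_def by blast

lemma subset_approx_cone: "P \<subseteq> approx_cone r"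
proof
  fix x assume "x \<in> P"
  show "x \<in> approx_cone r"
  proof (rule mem_approx_coneI, goal_cases)
    case (1 \<epsilon>)
    then have "eval_nat_poly 0 r \<le> \<epsilon> * real (1::nat)" by simp
    moreover have "(1 + 0) * (of_nat 1 * x + eval_nat_poly 0 v) \<in> P" using \<open>x \<in> P\<close> by simp
    ultimately show ?case using zero_mem by blast
  qed
qed

lemma approx_cone_add:
  assumes x: "x \<in> approx_cone r" and y: "y \<in> approx_cone r"
  shows "x + y \<in> approx_cone r"
proof (rule mem_approx_coneI, goal_cases)
  case (1 \<epsilon>)
  then have "\<epsilon> / 2 > 0" by simp
  obtain q1 w1 n1 where c1: "w1 \<in> P" "n1 > 0" "eval_nat_poly q1 r \<le> \<epsilon> / 2 * real n1"
      "(1 + w1) * (of_nat n1 * x + eval_nat_poly q1 v) \<in> P"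
    by (rule mem_approx_coneE[OF x \<open>\<epsilon> / 2 > 0\<close>])
  obtain q2 w2 n2 where c2: "w2 \<in> P" "n2 > 0" "eval_nat_poly q2 r \<le> \<epsilon> / 2 * real n2"
      "(1 + w2) * (of_nat n2 * y + eval_nat_poly q2 v) \<in> P"
    by (rule mem_approx_coneE[OF y \<open>\<epsilon> / 2 > 0\<close>])
  obtain w where "w \<in> P" and w: "(1 + w1) * (1 + w2) = 1 + w"
    by (rule one_plus_mult_closed[OF c1(1) c2(1)])
  define q where "q = smult n2 q1 + smult n1 q2"
  have "(1 + w) * (of_nat (n1 * n2) * (x + y) + eval_nat_poly q v) =
      of_nat n2 * (1 + w2) * ((1 + w1) * (of_nat n1 * x + eval_nat_poly q1 v)) +
      of_nat n1 * (1 + w1) * ((1 + w2) * (of_nat n2 * y + eval_nat_poly q2 v))"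
    unfolding q_def w[symmetric] by (simp add: eval_nat_poly_add eval_nat_poly_smult algebra_simps)
  also have "\<dots> \<in> P"
    by (rule add_mem[OF mult_mem[OF mult_mem[OF of_nat_mem add_mem[OF one_mem c2(1)]] c1(4)]
                        mult_mem[OF mult_mem[OF of_nat_mem add_mem[OF one_mem c1(1)]] c2(4)]])
  finally have "(1 + w) * (of_nat (n1 * n2) * (x + y) + eval_nat_poly q v) \<in> P" .
  moreover have "eval_nat_poly q r \<le> \<epsilon> * real (n1 * n2)"
  proof -
    have "eval_nat_poly q r = real n2 * eval_nat_poly q1 r + real n1 * eval_nat_poly q2 r"
      by (simp add: q_def eval_nat_poly_add eval_nat_poly_smult)
    also have "\<dots> \<le> real n2 * (\<epsilon> / 2 * real n1) + real n1 * (\<epsilon> / 2 * real n2)"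
      using c1(3) c2(3) by (intro add_mono mult_left_mono) auto
    also have "\<dots> = \<epsilon> * real (n1 * n2)" by (simp add: algebra_simps)
    finally show ?thesis .
  qed
  moreover have "n1 * n2 > 0" using c1(2) c2(2) by simp
  ultimately show ?case using \<open>w \<in> P\<close> by blast
qed


text \<open>With \<open>x \<le> p\<^sub>x(v)\<close> and \<open>y \<le> p\<^sub>y(v)\<close>, the product of two certificates
  \<open>c\<^sub>1 = (1 + w\<^sub>1)(n\<^sub>1 x + q\<^sub>1(v))\<close> and \<open>c\<^sub>2 = (1 + w\<^sub>2)(n\<^sub>2 y + q\<^sub>2(v))\<close> certifies \<open>x y\<close> after
  adding the nonnegative correction \<open>n\<^sub>1 q\<^sub>2(v)(p\<^sub>x(v) - x) + n\<^sub>2 q\<^sub>1(v)(p\<^sub>y(v) - y)\<close>; its error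
  polynomial is \<open>n\<^sub>1 q\<^sub>2 p\<^sub>x + n\<^sub>2 q\<^sub>1 p\<^sub>y + q\<^sub>1 q\<^sub>2\<close>.\<close>
lemma approx_cone_mult:
  assumes "r \<ge> 0" and x: "x \<in> approx_cone r" and y: "y \<in> approx_cone r"
  shows "x * y \<in> approx_cone r"
proof (rule mem_approx_coneI, goal_cases)
  case (1 \<epsilon>)
  obtain px py where px: "eval_nat_poly px v - x \<in> P" and py: "eval_nat_poly py v - y \<in> P"
    using bounded_by_poly by blast
  define A where "A = eval_nat_poly px r"
  define B where "B = eval_nat_poly py r"
  have "A \<ge> 0" "B \<ge> 0" unfolding A_def B_def using eval_nat_poly_nonneg \<open>r \<ge> 0\<close> by auto
  define \<eta> where "\<eta> = min 1 (\<epsilon> / (A + B + 1))"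
  have "\<eta> > 0" "\<eta> \<le> 1" unfolding \<eta>_def using 1 \<open>A \<ge> 0\<close> \<open>B \<ge> 0\<close> by auto
  have "\<eta> \<le> \<epsilon> / (A + B + 1)" unfolding \<eta>_def by simp
  then have "\<eta> * (A + B + 1) \<le> \<epsilon>"
    using \<open>A \<ge> 0\<close> \<open>B \<ge> 0\<close> by (simp add: field_simps)
  obtain q1 w1 n1 where c1: "w1 \<in> P" "n1 > 0" "eval_nat_poly q1 r \<le> \<eta> * real n1"
      "(1 + w1) * (of_nat n1 * x + eval_nat_poly q1 v) \<in> P"
    by (rule mem_approx_coneE[OF x \<open>\<eta> > 0\<close>])
  obtain q2 w2 n2 where c2: "w2 \<in> P" "n2 > 0" "eval_nat_poly q2 r \<le> \<eta> * real n2"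
      "(1 + w2) * (of_nat n2 * y + eval_nat_poly q2 v) \<in> P"
    by (rule mem_approx_coneE[OF y \<open>\<eta> > 0\<close>])
  obtain w where "w \<in> P" and w: "(1 + w1) * (1 + w2) = 1 + w"
    by (rule one_plus_mult_closed[OF c1(1) c2(1)])
  define q where "q = smult n1 (q2 * px) + smult n2 (q1 * py) + q1 * q2"
  have "(1 + w) * (of_nat (n1 * n2) * (x * y) + eval_nat_poly q v) =
      ((1 + w1) * (of_nat n1 * x + eval_nat_poly q1 v)) * ((1 + w2) * (of_nat n2 * y + eval_nat_poly q2 v)) +
      (1 + w1) * (1 + w2) * (of_nat n1 * eval_nat_poly q2 v * (eval_nat_poly px v - x) +
                             of_nat n2 * eval_nat_poly q1 v * (eval_nat_poly py v - y))"
    unfolding q_def w[symmetric]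
    by (simp add: eval_nat_poly_add eval_nat_poly_smult eval_nat_poly_mult algebra_simps)
  also have "\<dots> \<in> P"
    using v_mem c1(1) c2(1) px py
    by (intro add_mem[OF mult_mem[OF c1(4) c2(4)]] mult_mem[OF mult_mem] add_mem mult_mem
        of_nat_mem eval_nat_poly_mem one_mem)
  finally have "(1 + w) * (of_nat (n1 * n2) * (x * y) + eval_nat_poly q v) \<in> P" .
  moreover have "eval_nat_poly q r \<le> \<epsilon> * real (n1 * n2)"
  proof -
    define a1 where "a1 = eval_nat_poly q1 r"
    define a2 where "a2 = eval_nat_poly q2 r"
    have "a1 \<ge> 0" "a2 \<ge> 0" unfolding a1_def a2_def using eval_nat_poly_nonneg \<open>r \<ge> 0\<close> by auto
    have "eval_nat_poly q r = real n1 * (a2 * A) + real n2 * (a1 * B) + a1 * a2"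
      unfolding q_def a1_def a2_def A_def B_def
      by (simp add: eval_nat_poly_add eval_nat_poly_smult eval_nat_poly_mult)
    also have "\<dots> \<le> real n1 * ((\<eta> * real n2) * A) + real n2 * ((\<eta> * real n1) * B)
        + (\<eta> * real n1) * (\<eta> * real n2)"
      using c1(3) c2(3) \<open>a1 \<ge> 0\<close> \<open>a2 \<ge> 0\<close> \<open>A \<ge> 0\<close> \<open>B \<ge> 0\<close> \<open>\<eta> > 0\<close>
      unfolding a1_def a2_def by (intro add_mono mult_left_mono mult_right_mono mult_mono) auto
    also have "\<dots> = \<eta> * (A + B + \<eta>) * (real n1 * real n2)" by (simp add: algebra_simps)
    also have "\<dots> \<le> \<eta> * (A + B + 1) * (real n1 * real n2)"
      using \<open>\<eta> > 0\<close> \<open>\<eta> \<le> 1\<close> by (intro mult_right_mono mult_left_mono) auto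
    also have "\<dots> \<le> \<epsilon> * (real n1 * real n2)"
      using \<open>\<eta> * (A + B + 1) \<le> \<epsilon>\<close> by (intro mult_right_mono) auto
    finally show ?thesis by simp
  qed
  moreover have "n1 * n2 > 0" using c1(2) c2(2) by simp
  ultimately show ?case using \<open>w \<in> P\<close> by blast
qed


text \<open>From \<open>m\<^bsup>J+1\<^esup> - v\<^bsup>J+1\<^esup> = (m - v)(m\<^sup>J + v g)\<close> with \<open>g \<in> P\<close>, the factor \<open>1 + w = m\<^sup>J + v g\<close>
  turns \<open>m\<^sup>J (m - v) + v\<^bsup>J+1\<^esup>\<close> into \<open>m\<^bsup>2J+1\<^esup> + g v\<^bsup>J+2\<^esup> \<in> P\<close>; the error \<open>r\<^bsup>J+1\<^esup>\<close> is
  small against \<open>m\<^sup>J\<close> because \<open>r < m\<close>.\<close>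
lemma of_nat_minus_v_mem_approx_cone:
  assumes "r \<ge> 0" "r < real m"
  shows "of_nat m - v \<in> approx_cone r"
proof (rule mem_approx_coneI, goal_cases)
  case (1 \<epsilon>)
  have "m \<ge> 1" using assms by simp
  define \<rho> where "\<rho> = r / real m"
  have "0 \<le> \<rho>" "\<rho> < 1" unfolding \<rho>_def using assms by auto
  obtain J where J: "\<rho> ^ J < \<epsilon> / real m"
    using real_arch_pow_inv[of "\<epsilon> / real m" \<rho>] 1 \<open>m \<ge> 1\<close> \<open>\<rho> < 1\<close> by auto
  obtain g where "g \<in> P" and g: "of_nat m ^ Suc J - v ^ Suc J = (of_nat m - v) * (of_nat m ^ J + v * g)"
    using power_diff_cofactor[OF of_nat_mem v_mem] by blast
  define w where "w = of_nat (m ^ J - 1) + v * g"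
  have "w \<in> P" unfolding w_def using \<open>g \<in> P\<close> v_mem by (intro add_mem mult_mem of_nat_mem)
  have "1 + w = of_nat m ^ J + v * g"
    using \<open>m \<ge> 1\<close> by (simp add: w_def)
  then have "(1 + w) * (of_nat (m ^ J) * (of_nat m - v) + eval_nat_poly (monom 1 (Suc J)) v)
      = of_nat m ^ J * (of_nat m ^ Suc J - v ^ Suc J) + (of_nat m ^ J + v * g) * v ^ Suc J"
    unfolding g by (simp add: algebra_simps)
  also have "\<dots> = of_nat (m ^ J * m ^ Suc J) + g * v ^ Suc (Suc J)"
    by (simp add: algebra_simps)
  also have "\<dots> \<in> P"
    using \<open>g \<in> P\<close> v_mem by (intro add_mem mult_mem of_nat_mem power_mem)
  finally have "(1 + w) * (of_nat (m ^ J) * (of_nat m - v) + eval_nat_poly (monom 1 (Suc J)) v) \<in> P" .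
  moreover have "eval_nat_poly (monom 1 (Suc J)) r \<le> \<epsilon> * real (m ^ J)"
  proof -
    have "eval_nat_poly (monom 1 (Suc J)) r = \<rho> ^ Suc J * real m ^ Suc J"
      using \<open>m \<ge> 1\<close> by (simp add: \<rho>_def power_divide)
    also have "\<dots> \<le> \<rho> ^ J * real m ^ Suc J"
      using \<open>0 \<le> \<rho>\<close> \<open>\<rho> < 1\<close> by (intro mult_right_mono power_decreasing) auto
    also have "\<dots> \<le> (\<epsilon> / real m) * real m ^ Suc J"
      using J by (intro mult_right_mono) auto
    also have "\<dots> = \<epsilon> * real (m ^ J)" using \<open>m \<ge> 1\<close> by (simp add: field_simps)
    finally show ?thesis .
  qed
  moreover have "m ^ J > 0" using \<open>m \<ge> 1\<close> by simp
  ultimately show ?case using \<open>w \<in> P\<close> by blast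
qed

lemma approx_cone_archimedean:
  assumes "r \<ge> 0"
  shows "\<exists>n. of_nat n - x \<in> approx_cone r"
proof -
  define m where "m = nat \<lfloor>r\<rfloor> + 1"
  have "r < real m" unfolding m_def using assms by linarith
  have "of_nat (poly p m) - eval_nat_poly p v \<in> approx_cone r" for p
  proof (induction p)
    case 0
    show ?case using subset_approx_cone zero_mem by auto
  next
    case (pCons a p)
    have "of_nat (poly (pCons a p) m) - eval_nat_poly (pCons a p) v =
        of_nat (poly p m) * (of_nat m - v) + v * (of_nat (poly p m) - eval_nat_poly p v)"
      by (simp add: algebra_simps)
    also have "\<dots> \<in> approx_cone r"
      using subset_approx_cone of_nat_mem v_mem
      by (intro approx_cone_add approx_cone_mult[OF assms] pCons.IH
          of_nat_minus_v_mem_approx_cone[OF assms \<open>r < real m\<close>]) auto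
    finally show ?case .
  qed
  moreover obtain p where "eval_nat_poly p v - x \<in> P" using bounded_by_poly by blast
  ultimately have "(of_nat (poly p m) - eval_nat_poly p v) + (eval_nat_poly p v - x) \<in> approx_cone r"
    using subset_approx_cone by (intro approx_cone_add) auto
  then show ?thesis by auto
qed

lemma archimedean_subsemiring_approx_cone:
  assumes "r \<ge> 0"
  shows "archimedean_subsemiring (approx_cone r)"
  using subset_approx_cone zero_mem one_mem approx_cone_add approx_cone_mult[OF assms]
    approx_cone_archimedean[OF assms]
  by unfold_locales auto

lemma approx_cone_cancel_of_nat_mult:
  assumes "K > 0" and Kx: "of_nat K * x \<in> approx_cone r"
  shows "x \<in> approx_cone r"
proof (rule mem_approx_coneI, goal_cases)
  case (1 \<epsilon>)
  obtain q w n where c: "w \<in> P" "n > 0" "eval_nat_poly q r \<le> \<epsilon> * real n"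
      "(1 + w) * (of_nat n * (of_nat K * x) + eval_nat_poly q v) \<in> P"
    by (rule mem_approx_coneE[OF Kx 1])
  have "(1 + w) * (of_nat (n * K) * x + eval_nat_poly q v) \<in> P"
    using c(4) by (simp add: mult.assoc)
  moreover have "eval_nat_poly q r \<le> \<epsilon> * real (n * K)"
  proof -
    have "n \<le> n * K" using \<open>K > 0\<close> by simp
    then have "real n \<le> real (n * K)" by (simp only: of_nat_le_iff)
    then have "\<epsilon> * real n \<le> \<epsilon> * real (n * K)" using 1 by (intro mult_left_mono) auto
    then show ?thesis using c(3) by linarith
  qed
  moreover have "n * K > 0" using c(2) \<open>K > 0\<close> by simp
  ultimately show ?case using c(1) by blast
qed


lemma approx_cone_if_perturbations_mem:
  assumes perturbed: "\<And>n. n > 0 \<Longrightarrow> of_nat n * x + 1 \<in> approx_cone r"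
  shows "x \<in> approx_cone r"
proof (rule mem_approx_coneI, goal_cases)
  case (1 \<epsilon>)
  obtain n0 :: nat where "2 / \<epsilon> < real n0" using reals_Archimedean2 by blast
  define n where "n = Suc n0"
  have "n > 0" by (simp add: n_def)
  have "1 \<le> \<epsilon> / 2 * real n"
    using \<open>2 / \<epsilon> < real n0\<close> 1 by (simp add: n_def field_simps)
  have "\<epsilon> / 2 > 0" using 1 by simp
  obtain q w k where c: "w \<in> P" "k > 0" "eval_nat_poly q r \<le> \<epsilon> / 2 * real k"
      "(1 + w) * (of_nat k * (of_nat n * x + 1) + eval_nat_poly q v) \<in> P"
    by (rule mem_approx_coneE[OF perturbed[OF \<open>n > 0\<close>] \<open>\<epsilon> / 2 > 0\<close>])
  define q' where "q' = q + [:k:]"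
  have "(1 + w) * (of_nat (k * n) * x + eval_nat_poly q' v) \<in> P"
    using c(4) by (simp add: q'_def eval_nat_poly_add algebra_simps)
  moreover have "eval_nat_poly q' r \<le> \<epsilon> * real (k * n)"
  proof -
    have "1 \<le> real n" using \<open>n > 0\<close> by simp
    then have "\<epsilon> / 2 * real k \<le> \<epsilon> / 2 * real k * real n"
      using mult_left_mono[of 1 "real n" "\<epsilon> / 2 * real k"] 1 by simp
    moreover have "real k \<le> \<epsilon> / 2 * real n * real k"
      using mult_right_mono[OF \<open>1 \<le> \<epsilon> / 2 * real n\<close>, of "real k"] by simp
    moreover have "eval_nat_poly q' r = eval_nat_poly q r + real k"
      by (simp add: q'_def eval_nat_poly_add)
    ultimately show ?thesis using c(3) by (simp add: algebra_simps)
  qed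
  moreover have "k * n > 0" using c(2) \<open>n > 0\<close> by simp
  ultimately show ?case using c(1) by blast
qed

lemma mem_approx_cone_if_hom_nonneg:
  assumes "r \<ge> 0" and nonneg: "\<And>f. ring_hom_real f \<Longrightarrow> \<forall>x\<in>P. 0 \<le> f x \<Longrightarrow> 0 \<le> f a"
  shows "a \<in> approx_cone r"
proof (rule approx_cone_if_perturbations_mem)
  fix n :: nat assume "n > 0"
  interpret M: archimedean_subsemiring "approx_cone r"
    by (rule archimedean_subsemiring_approx_cone[OF \<open>r \<ge> 0\<close>])
  have "0 < f (of_nat n * a + 1)" if f: "ring_hom_real f" "\<forall>x\<in>approx_cone r. 0 \<le> f x" for f
  proof -
    have "0 \<le> f a" using nonneg f subset_approx_cone by blast
    moreover have "f (of_nat n * a + 1) = real n * f a + 1"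
      using f(1) ring_hom_real_of_nat[OF f(1)] by (simp add: ring_hom_real_def)
    ultimately show ?thesis by (simp add: add_nonneg_pos)
  qed
  then obtain K where "K > 0" "of_nat K * (of_nat n * a + 1) \<in> approx_cone r"
    by (rule M.multiple_mem_if_hom_pos)
  then show "of_nat n * a + 1 \<in> approx_cone r" by (rule approx_cone_cancel_of_nat_mult)
qed

lemma hom_nonneg_if_mem_approx_cone:
  assumes f: "ring_hom_real f" "\<forall>x\<in>P. 0 \<le> f x" and a: "a \<in> approx_cone (f v)"
  shows "0 \<le> f a"
proof (rule ccontr)
  assume "\<not> 0 \<le> f a"
  then have "- f a / 2 > 0" by simp
  obtain q w n where c: "w \<in> P" "n > 0" "eval_nat_poly q (f v) \<le> - f a / 2 * real n"
      "(1 + w) * (of_nat n * a + eval_nat_poly q v) \<in> P"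
    by (rule mem_approx_coneE[OF a \<open>- f a / 2 > 0\<close>])
  have "0 \<le> f ((1 + w) * (of_nat n * a + eval_nat_poly q v))" using f(2) c(4) by blast
  also have "\<dots> = (1 + f w) * (real n * f a + eval_nat_poly q (f v))"
    using f(1) ring_hom_real_of_nat[OF f(1)] ring_hom_real_eval_nat_poly[OF f(1)]
    by (simp add: ring_hom_real_def)
  finally have "0 \<le> (1 + f w) * (real n * f a + eval_nat_poly q (f v))" .
  moreover have "0 < 1 + f w" using f(2) c(1) by fastforce
  ultimately have "0 \<le> real n * f a + eval_nat_poly q (f v)"
    by (simp add: zero_le_mult_iff)
  with c(3) have "0 \<le> real n * f a" by (simp add: algebra_simps)
  moreover have "real n * f a < 0"
    using c(2) \<open>\<not> 0 \<le> f a\<close> by (simp add: mult_pos_neg)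
  ultimately show False by simp
qed

end

theorem theorem4p4:
  fixes P :: "'a::{comm_ring_1, ring_char_0} set" and v a :: 'a
  assumes add_closed: "\<And>x y. x \<in> P \<Longrightarrow> y \<in> P \<Longrightarrow> x + y \<in> P"
    and mult_closed: "\<And>x y. x \<in> P \<Longrightarrow> y \<in> P \<Longrightarrow> x * y \<in> P"
    and zero_in: "0 \<in> P" and one_in: "1 \<in> P"
    and v_in: "v \<in> P"
    and arch: "\<And>b. \<exists>p :: nat poly. eval_nat_poly p v - b \<in> P"
  shows "(\<forall>f. ring_hom_real f \<and> (\<forall>x\<in>P. f x \<ge> 0) \<longrightarrow> f a \<ge> 0) \<longleftrightarrow>
         (\<forall>r::real. r \<ge> 0 \<longrightarrow> (\<forall>\<epsilon>::real. \<epsilon> > 0 \<longrightarrow>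
            (\<exists>q :: nat poly. \<exists>w\<in>P. \<exists>n::nat. n > 0 \<and>
               eval_nat_poly q r \<le> \<epsilon> * real n \<and>
               (1 + w) * (of_nat n * a + eval_nat_poly q v) \<in> P)))"
proof -
  interpret nat_poly_archimedean P v
    using add_closed mult_closed zero_in one_in v_in arch by unfold_locales auto
  have "(\<forall>f. ring_hom_real f \<and> (\<forall>x\<in>P. f x \<ge> 0) \<longrightarrow> f a \<ge> 0) \<longleftrightarrow>
      (\<forall>r\<ge>0. a \<in> approx_cone r)"
    using mem_approx_cone_if_hom_nonneg hom_nonneg_if_mem_approx_cone v_in by blast
  then show ?thesis by (simp add: approx_cone_def)
qed

end
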